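(* For the compromise min-max regret shortest path problem, for any fixed $s$-$t$ path $x\in\mathcal{X}$, the number of changepoints of $reg(x,\cdot)$ is bounded by the number of extreme efficient solutions of the bicriteria shortest path problem $\min \{ (\sum_{e\in E: x_e = 1} 2\hat{c}_e y_e,\ \sum_{e\in E} \hat{c}_e y_e) : y\in\mathcal{X}\}$, i.e., $|\overline{\Lambda}(x)| \le |\mathcal{E}|$, where $\mathcal{E}$ is the set of those extreme efficient solutions (solutions obtainable as optima of weighted-sum scalarizations).
   Context: Let $G=(V,E)$ be a graph and $\mathcal{X}\subseteq\{0,1\}^{E}$ the set of (incidence vectors of) simple $s$-$t$ paths in $G$. Nominal edge costs $\hat{c}\ge 0$ are given, and for $\lambda\in[0,1]$ the uncertainty set is $\mathcal{U}(\lambda)=\prod_{e\in E}[(1-\lambda)\hat{c}_e,(1+\lambda)\hat{c}_e]$. For a fixed path $x$, the regret is $reg(x,\lambda)=\max_{c\in\mathcal{U}(\lambda)} \big(c^t x - \min_{y\in\mathcal{X}} c^t y\big)$, which is a piecewise linear function of $\lambda$; $\overline{\Lambda}(x)\subseteq[0,1]$ denotes its set of changepoints. One has $reg(x,\lambda)=\sum_{e: x_e=1}(1+\lambda)\hat{c}_e - \min_{y\in\mathcal{X}}\big(\lambda\sum_{e:x_e=1}2\hat{c}_e y_e + (1-\lambda)\sum_{e\in E}\hat{c}_e y_e\big)$ up to sign conventions of the rewriting, so the inner minimization is a weighted sum of the two objectives of the bicriteria problem above. The compromise problem is $\min_{x\in\mathcal{X}} \int_0^1 reg(x,\lambda)\,d\lambda$.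 *)

theory Defs
  imports "HOL-Analysis.Analysis"
begin

text \<open>Undirected graph: finite vertex set V, edges are 2-element vertex sets.
  A path is represented by its edge set (= incidence vector).\<close>

definition st_paths :: "'v set set \<Rightarrow> 'v \<Rightarrow> 'v \<Rightarrow> 'v set set set" where
  "st_paths E s t = {P. \<exists>vs. vs \<noteq> [] \<and> distinct vs \<and> hd vs = s \<and> last vs = t \<and>
      (\<forall>i < length vs - 1. {vs ! i, vs ! Suc i} \<in> E) \<and>
      P = {{vs ! i, vs ! Suc i} | i. i < length vs - 1}}"

definition path_cost :: "('e \<Rightarrow> real) \<Rightarrow> 'e set \<Rightarrow> real" where
  "path_cost c P = (\<Sum>e\<in>P. c e)"

definition unc_set :: "'e set \<Rightarrow> ('e \<Rightarrow> real) \<Rightarrow> real \<Rightarrow> ('e \<Rightarrow> real) set" where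
  "unc_set E ch l = {c. \<forall>e\<in>E. (1 - l) * ch e \<le> c e \<and> c e \<le> (1 + l) * ch e}"

definition regret :: "'e set \<Rightarrow> ('e \<Rightarrow> real) \<Rightarrow> 'e set set \<Rightarrow> 'e set \<Rightarrow> real \<Rightarrow> real" where
  "regret E ch X x l = (SUP c \<in> unc_set E ch l. path_cost c x - Min ((\<lambda>y. path_cost c y) ` X))"

text \<open>Changepoints of a piecewise linear function on [0,1]: interior points where
  the slope changes, i.e. where the function is not differentiable.\<close>
definition changepoints :: "(real \<Rightarrow> real) \<Rightarrow> real set" where
  "changepoints f = {l \<in> {0<..<1}. \<not> f differentiable (at l)}"

definition bicrit :: "('e \<Rightarrow> real) \<Rightarrow> 'e set \<Rightarrow> 'e set \<Rightarrow> real \<times> real" where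
  "bicrit ch x y = ((\<Sum>e\<in>x \<inter> y. 2 * ch e), (\<Sum>e\<in>y. ch e))"

definition efficient :: "('e \<Rightarrow> real) \<Rightarrow> 'e set \<Rightarrow> 'e set set \<Rightarrow> 'e set \<Rightarrow> bool" where
  "efficient ch x X y \<longleftrightarrow> y \<in> X \<and>
     \<not> (\<exists>y'\<in>X. fst (bicrit ch x y') \<le> fst (bicrit ch x y) \<and> snd (bicrit ch x y') \<le> snd (bicrit ch x y)
              \<and> bicrit ch x y' \<noteq> bicrit ch x y)"

text \<open>Extreme efficient solutions: efficient solutions whose image is an extreme point
  of conv(z(X)) + R^2_{\<ge>0} (exactly the solutions that are optima of weighted-sum
  scalarisations at extreme points of the nondominated frontier).\<close>
definition extreme_efficient :: "('e \<Rightarrow> real) \<Rightarrow> 'e set \<Rightarrow> 'e set set \<Rightarrow> 'e set set" where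
  "extreme_efficient ch x X = {y. efficient ch x X y \<and>
     (bicrit ch x y) extreme_point_of
       {p + q | p q. p \<in> convex hull (bicrit ch x ` X) \<and> fst q \<ge> 0 \<and> snd q \<ge> 0}}"

end

theory Submission
  imports Defs
begin

text \<open>For a fixed path \<open>x\<close>, the worst scenario in \<open>U(\<lambda>)\<close> charges \<open>(1 + \<lambda>) \<cdot> c\<close> on \<open>x\<close> and
  \<open>(1 - \<lambda>) \<cdot> c\<close> elsewhere, so \<open>reg(x, \<lambda>)\<close> is the upper envelope of the finitely many lines
  \<open>\<lambda> \<mapsto> (1 + \<lambda>) c(x) - (\<lambda> z\<^sub>1(y) + (1 - \<lambda>) z\<^sub>2(y))\<close>, one per path \<open>y\<close>. A changepoint of such an
  envelope is a point where two lines cross; just after it some line is the unique top line,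
  i.e. \<open>y\<close> uniquely minimises a weighted sum with positive weights of the bicriteria objectives,
  which makes \<open>y\<close> extreme efficient. Distinct changepoints yield distinct such \<open>y\<close>, since a
  line on top just after two changepoints stays on top in between.\<close>

section \<open>Upper envelopes of finitely many lines\<close>

definition top_line_at :: "'a set \<Rightarrow> ('a \<Rightarrow> real) \<Rightarrow> ('a \<Rightarrow> real) \<Rightarrow> real \<Rightarrow> 'a \<Rightarrow> bool" where
  "top_line_at X \<alpha> \<beta> t y \<longleftrightarrow> y \<in> X \<and> (\<forall>y'\<in>X. \<alpha> y' + t * \<beta> y' \<le> \<alpha> y + t * \<beta> y)"

definition line_crossings :: "'a set \<Rightarrow> ('a \<Rightarrow> real) \<Rightarrow> ('a \<Rightarrow> real) \<Rightarrow> real set" where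
  "line_crossings X \<alpha> \<beta> =
     {t. \<exists>y\<in>X. \<exists>y'\<in>X. \<beta> y \<noteq> \<beta> y' \<and> \<alpha> y + t * \<beta> y = \<alpha> y' + t * \<beta> y'}"

lemma finite_line_crossings:
  assumes "finite X"
  shows "finite (line_crossings X \<alpha> \<beta>)"
proof -
  have "line_crossings X \<alpha> \<beta> \<subseteq> (\<lambda>(y, y'). (\<alpha> y' - \<alpha> y) / (\<beta> y - \<beta> y')) ` (X \<times> X)"
  proof
    fix t assume "t \<in> line_crossings X \<alpha> \<beta>"
    then obtain y y' where yy': "y \<in> X" "y' \<in> X" "\<beta> y \<noteq> \<beta> y'"
      and meet: "\<alpha> y + t * \<beta> y = \<alpha> y' + t * \<beta> y'"
      unfolding line_crossings_def by blast
    from meet yy'(3) have "t = (\<alpha> y' - \<alpha> y) / (\<beta> y - \<beta> y')"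
      by (simp add: field_simps)
    with yy' show "t \<in> (\<lambda>(y, y'). (\<alpha> y' - \<alpha> y) / (\<beta> y - \<beta> y')) ` (X \<times> X)"
      by force
  qed
  moreover have "finite ((\<lambda>(y, y'). (\<alpha> y' - \<alpha> y) / (\<beta> y - \<beta> y')) ` (X \<times> X))"
    using assms by simp
  ultimately show ?thesis by (rule finite_subset)
qed

lemma top_line_exists:
  assumes "finite X" "X \<noteq> {}"
  obtains y where "top_line_at X \<alpha> \<beta> t y"
proof -
  have "Max ((\<lambda>y. \<alpha> y + t * \<beta> y) ` X) \<in> (\<lambda>y. \<alpha> y + t * \<beta> y) ` X"
    using assms by (intro Max_in) auto
  then obtain y where "y \<in> X" "\<alpha> y + t * \<beta> y = Max ((\<lambda>y. \<alpha> y + t * \<beta> y) ` X)"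
    by auto
  with assms(1) have "top_line_at X \<alpha> \<beta> t y"
    unfolding top_line_at_def by simp
  then show ?thesis ..
qed

lemma Max_eq_top_line:
  assumes "finite X" "top_line_at X \<alpha> \<beta> t y"
  shows "Max ((\<lambda>y. \<alpha> y + t * \<beta> y) ` X) = \<alpha> y + t * \<beta> y"
  using assms unfolding top_line_at_def by (intro Max_eqI) auto

lemma top_line_at_between:
  assumes "top_line_at X \<alpha> \<beta> a y" "top_line_at X \<alpha> \<beta> b y" "a \<le> t" "t \<le> b"
  shows "top_line_at X \<alpha> \<beta> t y"
  unfolding top_line_at_def
proof (intro conjI ballI)
  show "y \<in> X" using assms(1) unfolding top_line_at_def by simp
  fix y' assume "y' \<in> X"
  then have at_a: "\<alpha> y' + a * \<beta> y' \<le> \<alpha> y + a * \<beta> y"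
    and at_b: "\<alpha> y' + b * \<beta> y' \<le> \<alpha> y + b * \<beta> y"
    using assms(1,2) unfolding top_line_at_def by auto
  show "\<alpha> y' + t * \<beta> y' \<le> \<alpha> y + t * \<beta> y"
  proof (cases "\<beta> y' \<le> \<beta> y")
    case True
    then have "a * (\<beta> y - \<beta> y') \<le> t * (\<beta> y - \<beta> y')"
      using assms(3) by (simp add: mult_right_mono)
    with at_a show ?thesis by (simp add: algebra_simps)
  next
    case False
    then have "b * (\<beta> y - \<beta> y') \<le> t * (\<beta> y - \<beta> y')"
      using assms(4) by (simp add: mult_right_mono_neg)
    with at_b show ?thesis by (simp add: algebra_simps)
  qed
qed

text \<open>If another line overtook the top line between \<open>l\<close> and \<open>t\<close>, the two would cross
  strictly closer to \<open>l\<close> than \<open>t\<close> is.\<close>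

lemma top_line_at_until_crossing:
  assumes top: "top_line_at X \<alpha> \<beta> l y"
    and far: "\<And>k. k \<in> line_crossings X \<alpha> \<beta> \<Longrightarrow> \<bar>t - l\<bar> \<le> \<bar>k - l\<bar>"
  shows "top_line_at X \<alpha> \<beta> t y"
  unfolding top_line_at_def
proof (intro conjI ballI)
  show y: "y \<in> X" using top unfolding top_line_at_def by simp
  fix y' assume y': "y' \<in> X"
  define D where "D = \<alpha> y - \<alpha> y'"
  define S where "S = \<beta> y - \<beta> y'"
  have at_l: "0 \<le> D + l * S"
    using top y' unfolding top_line_at_def D_def S_def by (simp add: algebra_simps)
  show "\<alpha> y' + t * \<beta> y' \<le> \<alpha> y + t * \<beta> y"
  proof (rule ccontr)
    assume "\<not> ?thesis"
    then have at_t: "D + t * S < 0" unfolding D_def S_def by (simp add: algebra_simps)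
    with at_l have "S \<noteq> 0" by auto
    define k where "k = - D / S"
    have "D + k * S = 0" using \<open>S \<noteq> 0\<close> unfolding k_def by simp
    with \<open>S \<noteq> 0\<close> y y' have "k \<in> line_crossings X \<alpha> \<beta>"
      unfolding line_crossings_def D_def S_def by (auto simp: algebra_simps)
    moreover have "\<bar>k - l\<bar> < \<bar>t - l\<bar>"
    proof (cases "S > 0")
      case True
      with at_l at_t have "t < k" "k \<le> l" unfolding k_def by (simp_all add: field_simps)
      then show ?thesis by simp
    next
      case False
      with \<open>S \<noteq> 0\<close> at_l at_t have "k < t" "l \<le> k" unfolding k_def by (simp_all add: field_simps)
      then show ?thesis by simp
    qed
    ultimately show False using far[of k] by linarith
  qed
qed

lemma top_line_at_strict_off_crossings:
  assumes "top_line_at X \<alpha> \<beta> t y" "t \<notin> line_crossings X \<alpha> \<beta>"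
    and "y' \<in> X" "(\<alpha> y', \<beta> y') \<noteq> (\<alpha> y, \<beta> y)"
  shows "\<alpha> y' + t * \<beta> y' < \<alpha> y + t * \<beta> y"
proof -
  have "y \<in> X" "\<alpha> y' + t * \<beta> y' \<le> \<alpha> y + t * \<beta> y"
    using assms(1,3) unfolding top_line_at_def by auto
  moreover have "\<alpha> y' + t * \<beta> y' \<noteq> \<alpha> y + t * \<beta> y"
  proof
    assume meet: "\<alpha> y' + t * \<beta> y' = \<alpha> y + t * \<beta> y"
    with assms(4) have "\<beta> y' \<noteq> \<beta> y" by auto
    with meet \<open>y \<in> X\<close> assms(2,3) show False
      unfolding line_crossings_def by blast
  qed
  ultimately show ?thesis by simp
qed

lemma exists_gap_after:
  fixes K :: "real set"
  assumes "finite K" "l < 1"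
  obtains m where "l < m" "m < 1" "m \<notin> K" "\<And>k. k \<in> K \<Longrightarrow> l < k \<Longrightarrow> m < k"
proof -
  define r where "r = Min (insert 1 {k\<in>K. l < k})"
  have fin: "finite (insert 1 {k\<in>K. l < k})" using assms(1) by simp
  have "l < r" unfolding r_def using fin assms(2) by (subst Min_gr_iff) auto
  have r_le: "r \<le> k" if "k \<in> insert 1 {k\<in>K. l < k}" for k
    unfolding r_def using fin that by (rule Min_le)
  define m where "m = (l + r) / 2"
  have "l < m" "m < r" using \<open>l < r\<close> unfolding m_def by auto
  have before: "m < k" if "k \<in> K" "l < k" for k
    using r_le[of k] that \<open>m < r\<close> by auto
  show ?thesis
  proof (rule that[of m])
    show "m < 1" using r_le[of 1] \<open>m < r\<close> by auto
    show "m \<notin> K" using before \<open>l < m\<close> by blast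
  qed (use \<open>l < m\<close> before in auto)
qed

locale upper_envelope =
  fixes X :: "'a set" and \<alpha> \<beta> :: "'a \<Rightarrow> real" and R :: "real \<Rightarrow> real"
  assumes finite_lines: "finite X" and lines_nonempty: "X \<noteq> {}"
    and envelope: "\<And>t. t \<in> {0<..<1} \<Longrightarrow> R t = Max ((\<lambda>y. \<alpha> y + t * \<beta> y) ` X)"
begin

lemma differentiable_if_top_line_around:
  assumes "0 \<le> u" "v \<le> 1" "l \<in> {u<..<v}"
    and top: "\<And>t. t \<in> {u<..<v} \<Longrightarrow> top_line_at X \<alpha> \<beta> t y"
  shows "R differentiable (at l)"
proof -
  have "((\<lambda>t. \<alpha> y + t * \<beta> y) has_derivative (\<lambda>h. h * \<beta> y)) (at l)"
    by (auto intro!: derivative_eq_intros)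
  then have "(R has_derivative (\<lambda>h. h * \<beta> y)) (at l)"
  proof (rule has_derivative_transform_within_open[where s = "{u<..<v}"])
    fix t assume "t \<in> {u<..<v}"
    with assms(1,2) envelope[of t] Max_eq_top_line[OF finite_lines top]
    show "\<alpha> y + t * \<beta> y = R t" by auto
  qed (use assms(3) in auto)
  then show ?thesis unfolding differentiable_def by blast
qed

lemma changepoints_subset_line_crossings: "changepoints R \<subseteq> line_crossings X \<alpha> \<beta>"
proof
  fix l assume l: "l \<in> changepoints R"
  then have "0 < l" "l < 1" unfolding changepoints_def by auto
  show "l \<in> line_crossings X \<alpha> \<beta>"
  proof (rule ccontr)
    assume "l \<notin> line_crossings X \<alpha> \<beta>"
    then obtain \<delta> where "\<delta> > 0" and avoid: "\<And>k. k \<in> line_crossings X \<alpha> \<beta> \<Longrightarrow> \<delta> \<le> \<bar>k - l\<bar>"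
      using finite_set_avoid[OF finite_line_crossings[OF finite_lines], where a = l]
      by (metis dist_commute dist_real_def)
    define \<epsilon> where "\<epsilon> = min \<delta> (min l (1 - l))"
    obtain y where top: "top_line_at X \<alpha> \<beta> l y"
      using top_line_exists[OF finite_lines lines_nonempty] .
    have "R differentiable (at l)"
    proof (rule differentiable_if_top_line_around[where u = "l - \<epsilon>" and v = "l + \<epsilon>"])
      fix t assume "t \<in> {l - \<epsilon><..<l + \<epsilon>}"
      then have "\<bar>t - l\<bar> \<le> \<delta>" unfolding \<epsilon>_def by auto
      with avoid show "top_line_at X \<alpha> \<beta> t y"
        by (intro top_line_at_until_crossing[OF top]) (meson order_trans)
    qed (use \<open>\<delta> > 0\<close> \<open>0 < l\<close> \<open>l < 1\<close> in \<open>auto simp: \<epsilon>_def\<close>)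
    with l show False unfolding changepoints_def by blast
  qed
qed

lemma top_line_after_changepoint:
  assumes "l \<in> changepoints R"
  obtains m y where "l < m" "m < 1" "m \<notin> line_crossings X \<alpha> \<beta>"
    "\<And>k. k \<in> line_crossings X \<alpha> \<beta> \<Longrightarrow> l < k \<Longrightarrow> m < k" "top_line_at X \<alpha> \<beta> m y"
proof -
  have "l < 1" using assms unfolding changepoints_def by auto
  with finite_line_crossings[OF finite_lines, of \<alpha> \<beta>] obtain m where "l < m" "m < 1"
    "m \<notin> line_crossings X \<alpha> \<beta>" "\<And>k. k \<in> line_crossings X \<alpha> \<beta> \<Longrightarrow> l < k \<Longrightarrow> m < k"
    by (rule exists_gap_after) blast
  moreover obtain y where "top_line_at X \<alpha> \<beta> m y"
    using top_line_exists[OF finite_lines lines_nonempty] .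
  ultimately show ?thesis by (rule that)
qed

lemma top_lines_after_changepoints_distinct:
  assumes "l \<in> changepoints R" "l' \<in> changepoints R" "l < l'"
    and "l < m" "\<And>k. k \<in> line_crossings X \<alpha> \<beta> \<Longrightarrow> l < k \<Longrightarrow> m < k"
    and "l' < m'" "m' < 1"
    and top1: "top_line_at X \<alpha> \<beta> m y" and top2: "top_line_at X \<alpha> \<beta> m' y'"
  shows "y \<noteq> y'"
proof
  assume "y = y'"
  have "m < l'"
    using assms(2,3,5) changepoints_subset_line_crossings by blast
  have "0 < l" using assms(1) unfolding changepoints_def by simp
  have "R differentiable (at l')"
  proof (rule differentiable_if_top_line_around[where u = m and v = m'])
    show "0 \<le> m" "m' \<le> 1" "l' \<in> {m<..<m'}"
      using \<open>0 < l\<close> \<open>m < l'\<close> assms(4,6,7) by simp_all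
    show "top_line_at X \<alpha> \<beta> t y'" if "t \<in> {m<..<m'}" for t
      using top_line_at_between[OF top1[unfolded \<open>y = y'\<close>] top2] that by simp
  qed
  with assms(2) show False unfolding changepoints_def by blast
qed

lemma card_changepoints_le:
  assumes "finite Z"
    and unique_top: "\<And>y m. y \<in> X \<Longrightarrow> m \<in> {0<..<1} \<Longrightarrow>
       (\<forall>y'\<in>X. (\<alpha> y', \<beta> y') \<noteq> (\<alpha> y, \<beta> y) \<longrightarrow> \<alpha> y' + m * \<beta> y' < \<alpha> y + m * \<beta> y) \<Longrightarrow> y \<in> Z"
  shows "finite (changepoints R) \<and> card (changepoints R) \<le> card Z"
proof -
  have "\<exists>m y. l < m \<and> m < 1 \<and> m \<notin> line_crossings X \<alpha> \<beta>
      \<and> (\<forall>k\<in>line_crossings X \<alpha> \<beta>. l < k \<longrightarrow> m < k) \<and> top_line_at X \<alpha> \<beta> m y"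
    if l: "l \<in> changepoints R" for l
    by (rule top_line_after_changepoint[OF l]) blast
  then obtain \<mu> \<phi> where \<mu>: "\<And>l. l \<in> changepoints R \<Longrightarrow>
      l < \<mu> l \<and> \<mu> l < 1 \<and> \<mu> l \<notin> line_crossings X \<alpha> \<beta> \<and>
      (\<forall>k\<in>line_crossings X \<alpha> \<beta>. l < k \<longrightarrow> \<mu> l < k) \<and> top_line_at X \<alpha> \<beta> (\<mu> l) (\<phi> l)"
    by metis
  have "\<phi> l \<in> Z" if l: "l \<in> changepoints R" for l
  proof (rule unique_top)
    show "\<phi> l \<in> X" using \<mu>[OF l] unfolding top_line_at_def by blast
    show "\<mu> l \<in> {0<..<1}" using \<mu>[OF l] l unfolding changepoints_def by auto
    show "\<forall>y'\<in>X. (\<alpha> y', \<beta> y') \<noteq> (\<alpha> (\<phi> l), \<beta> (\<phi> l)) \<longrightarrow>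
        \<alpha> y' + \<mu> l * \<beta> y' < \<alpha> (\<phi> l) + \<mu> l * \<beta> (\<phi> l)"
      using \<mu>[OF l] top_line_at_strict_off_crossings[of X \<alpha> \<beta> "\<mu> l" "\<phi> l"]
      by blast
  qed
  moreover have "inj_on \<phi> (changepoints R)"
  proof (rule linorder_inj_onI')
    fix l1 l2 assume "l1 \<in> changepoints R" "l2 \<in> changepoints R" "l1 < l2"
    with \<mu>[of l1] \<mu>[of l2] show "\<phi> l1 \<noteq> \<phi> l2"
      by (intro top_lines_after_changepoints_distinct
          [where l = l1 and l' = l2 and m = "\<mu> l1" and m' = "\<mu> l2"]) auto
  qed
  ultimately have "card (changepoints R) \<le> card Z"
    by (intro card_inj_on_le[OF _ _ \<open>finite Z\<close>]) auto
  moreover have "finite (changepoints R)"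
    using changepoints_subset_line_crossings finite_line_crossings[OF finite_lines] by (rule finite_subset)
  ultimately show ?thesis by blast
qed

end

section \<open>Unique minimisers of linear functionals\<close>

lemma convex_hull_unique_minimizer:
  fixes Z :: "'a::euclidean_space set"
  assumes "finite Z" "z \<in> Z" and strict: "\<And>z'. z' \<in> Z \<Longrightarrow> z' \<noteq> z \<Longrightarrow> a \<bullet> z < a \<bullet> z'"
  shows "\<forall>p \<in> convex hull Z. a \<bullet> z \<le> a \<bullet> p"
    and "convex hull Z \<inter> {p. a \<bullet> p = a \<bullet> z} = {z}"
proof -
  have "Z \<subseteq> {p. a \<bullet> z \<le> a \<bullet> p}"
    using strict by (fastforce intro: less_imp_le)
  then have ge: "convex hull Z \<subseteq> {p. a \<bullet> z \<le> a \<bullet> p}"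
    by (rule hull_minimal) (rule convex_halfspace_ge)
  then show "\<forall>p \<in> convex hull Z. a \<bullet> z \<le> a \<bullet> p" by blast
  define F where "F = convex hull Z \<inter> {p. a \<bullet> p = a \<bullet> z}"
  have "F face_of convex hull Z"
    unfolding F_def using ge by (intro face_of_Int_supporting_hyperplane_ge) auto
  then obtain Z' where "Z' \<subseteq> Z" and F: "F = convex hull Z'"
    using face_of_convex_hull_subset finite_imp_compact[OF \<open>finite Z\<close>] by metis
  have "Z' \<subseteq> {z}"
  proof
    fix z' assume "z' \<in> Z'"
    then have "z' \<in> Z" "a \<bullet> z' = a \<bullet> z"
      using \<open>Z' \<subseteq> Z\<close> hull_subset[of Z' convex] unfolding F[symmetric] F_def by auto
    with strict show "z' \<in> {z}" by fastforce
  qed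
  then have "F \<subseteq> {z}"
    unfolding F using hull_mono by fastforce
  moreover have "z \<in> F"
    unfolding F_def using \<open>z \<in> Z\<close> by (simp add: hull_inc)
  ultimately show "convex hull Z \<inter> {p. a \<bullet> p = a \<bullet> z} = {z}"
    unfolding F_def by blast
qed

lemma extreme_point_of_convex_hull_plus_orthant:
  fixes Z :: "(real \<times> real) set"
  assumes "finite Z" "z \<in> Z" "0 < a" "0 < b"
    and strict: "\<And>z'. z' \<in> Z \<Longrightarrow> z' \<noteq> z \<Longrightarrow> a * fst z + b * snd z < a * fst z' + b * snd z'"
  shows "z extreme_point_of {p + q | p q. p \<in> convex hull Z \<and> 0 \<le> fst q \<and> 0 \<le> snd q}"
proof -
  define S where "S = {p + q | p q. p \<in> convex hull Z \<and> 0 \<le> fst q \<and> 0 \<le> snd q}"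
  have inner: "(a, b) \<bullet> p = a * fst p + b * snd p" for p :: "real \<times> real"
    by (cases p) simp
  have "(a, b) \<bullet> z < (a, b) \<bullet> z'" if "z' \<in> Z" "z' \<noteq> z" for z'
    using strict[OF that] by (simp add: inner)
  note hull = convex_hull_unique_minimizer[OF assms(1,2) this, unfolded inner]
  have orthant: "0 \<le> a * fst q + b * snd q" and
    orthant_eq: "a * fst q + b * snd q = 0 \<Longrightarrow> q = 0"
    if "0 \<le> fst q" "0 \<le> snd q" for q :: "real \<times> real"
    using that assms(3,4) by (simp_all add: add_nonneg_eq_0_iff prod_eq_iff)
  have support: "(a, b) \<bullet> z \<le> (a, b) \<bullet> x" if "x \<in> S" for x
  proof -
    obtain p q where "x = p + q" "p \<in> convex hull Z" "0 \<le> fst q" "0 \<le> snd q"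
      using \<open>x \<in> S\<close> unfolding S_def by blast
    with hull(1) orthant[of q] show ?thesis unfolding inner by (fastforce simp: algebra_simps)
  qed
  have touch: "S \<inter> {x. (a, b) \<bullet> x = (a, b) \<bullet> z} = {z}"
  proof
    show "S \<inter> {x. (a, b) \<bullet> x = (a, b) \<bullet> z} \<subseteq> {z}"
    proof
      fix x assume "x \<in> S \<inter> {x. (a, b) \<bullet> x = (a, b) \<bullet> z}"
      then obtain p q where x: "x = p + q" "p \<in> convex hull Z" "0 \<le> fst q" "0 \<le> snd q"
        and eq: "a * fst x + b * snd x = a * fst z + b * snd z"
        unfolding S_def inner by blast
      have "a * fst z + b * snd z \<le> a * fst p + b * snd p"
        using hull(1) x(2) by blast
      with eq orthant[OF x(3,4)] have "a * fst q + b * snd q = 0"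
        "a * fst p + b * snd p = a * fst z + b * snd z"
        unfolding x(1) by (simp_all add: algebra_simps)
      then have "q = 0" "p = z"
        using orthant_eq[OF x(3,4)] hull(2) x(2) by auto
      then show "x \<in> {z}" using x(1) by simp
    qed
    show "{z} \<subseteq> S \<inter> {x. (a, b) \<bullet> x = (a, b) \<bullet> z}"
      unfolding S_def using \<open>z \<in> Z\<close> by (force intro: hull_inc)
  qed
  show ?thesis
    unfolding S_def[symmetric] using touch support by (rule extreme_point_of_Int_supporting_hyperplane_ge)
qed

lemma extreme_efficient_if_unique_weighted_sum_minimizer:
  assumes "finite X" "y \<in> X" "0 < m" "m < 1"
    and strict: "\<And>y'. y' \<in> X \<Longrightarrow> bicrit ch x y' \<noteq> bicrit ch x y \<Longrightarrow>
       m * fst (bicrit ch x y) + (1 - m) * snd (bicrit ch x y)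
         < m * fst (bicrit ch x y') + (1 - m) * snd (bicrit ch x y')"
  shows "y \<in> extreme_efficient ch x X"
proof -
  have "efficient ch x X y"
    unfolding efficient_def
  proof (intro conjI notI \<open>y \<in> X\<close>)
    assume "\<exists>y'\<in>X. fst (bicrit ch x y') \<le> fst (bicrit ch x y) \<and> snd (bicrit ch x y') \<le> snd (bicrit ch x y)
      \<and> bicrit ch x y' \<noteq> bicrit ch x y"
    then obtain y' where "y' \<in> X" "bicrit ch x y' \<noteq> bicrit ch x y"
      and "fst (bicrit ch x y') \<le> fst (bicrit ch x y)" "snd (bicrit ch x y') \<le> snd (bicrit ch x y)"
      by blast
    moreover from this have "m * fst (bicrit ch x y') \<le> m * fst (bicrit ch x y)"
      "(1 - m) * snd (bicrit ch x y') \<le> (1 - m) * snd (bicrit ch x y)"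
      using assms(3,4) by (simp_all add: mult_left_mono)
    ultimately show False using strict by fastforce
  qed
  moreover have "bicrit ch x y extreme_point_of
      {p + q | p q. p \<in> convex hull (bicrit ch x ` X) \<and> 0 \<le> fst q \<and> 0 \<le> snd q}"
    using assms(1-4) strict
    by (intro extreme_point_of_convex_hull_plus_orthant[where a = m and b = "1 - m"]) auto
  ultimately show ?thesis
    unfolding extreme_efficient_def by simp
qed

section \<open>The regret as an upper envelope\<close>

lemma path_cost_diff:
  assumes "finite x" "finite y"
  shows "path_cost c x - path_cost c y = sum c (x - y) - sum c (y - x)"
proof -
  have "sum c x = sum c (x \<inter> y) + sum c (x - y)" "sum c y = sum c (y \<inter> x) + sum c (y - x)"
    using sum.Int_Diff[OF assms(1)] sum.Int_Diff[OF assms(2)] by blast+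
  then show ?thesis unfolding path_cost_def by (simp add: Int_commute)
qed

lemma path_cost_diff_le:
  assumes "c \<in> unc_set E ch t" "x \<subseteq> E" "y \<subseteq> E" "finite x" "finite y"
  shows "path_cost c x - path_cost c y \<le> (1 + t) * sum ch (x - y) - (1 - t) * sum ch (y - x)"
proof -
  have "sum c (x - y) \<le> (1 + t) * sum ch (x - y)" "(1 - t) * sum ch (y - x) \<le> sum c (y - x)"
    using assms(1-3) unfolding sum_distrib_left unc_set_def by (auto intro!: sum_mono)
  then show ?thesis using path_cost_diff[OF assms(4,5), of c] by linarith
qed

definition worst_case_scenario :: "('e \<Rightarrow> real) \<Rightarrow> 'e set \<Rightarrow> real \<Rightarrow> 'e \<Rightarrow> real" where
  "worst_case_scenario ch x t e = (if e \<in> x then (1 + t) * ch e else (1 - t) * ch e)"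

lemma worst_case_scenario_in_unc_set:
  assumes "\<forall>e\<in>E. 0 \<le> ch e" "0 \<le> t"
  shows "worst_case_scenario ch x t \<in> unc_set E ch t"
  using assms unfolding unc_set_def worst_case_scenario_def by (auto simp: mult_right_mono)

lemma path_cost_diff_worst_case_scenario:
  assumes "finite x" "finite y"
  shows "path_cost (worst_case_scenario ch x t) x - path_cost (worst_case_scenario ch x t) y
       = (1 + t) * sum ch (x - y) - (1 - t) * sum ch (y - x)"
proof -
  have "sum (worst_case_scenario ch x t) (x - y) = (\<Sum>e\<in>x - y. (1 + t) * ch e)"
    "sum (worst_case_scenario ch x t) (y - x) = (\<Sum>e\<in>y - x. (1 - t) * ch e)"
    unfolding worst_case_scenario_def by (auto intro: sum.cong)
  then show ?thesis unfolding path_cost_diff[OF assms] sum_distrib_left by simp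
qed

lemma regret_eq_Max:
  assumes "finite E" "finite X" "X \<noteq> {}" "\<And>y. y \<in> X \<Longrightarrow> y \<subseteq> E" "x \<subseteq> E"
    and "\<forall>e\<in>E. 0 \<le> ch e" "0 \<le> t"
  shows "regret E ch X x t = Max ((\<lambda>y. (1 + t) * sum ch (x - y) - (1 - t) * sum ch (y - x)) ` X)"
proof -
  define h where "h y = (1 + t) * sum ch (x - y) - (1 - t) * sum ch (y - x)" for y
  define F where "F c = path_cost c x - Min ((\<lambda>y. path_cost c y) ` X)" for c
  have fin: "finite y" if "y \<subseteq> E" for y using that \<open>finite E\<close> by (rule finite_subset)
  have le_Max: "h y \<le> Max (h ` X)" if "y \<in> X" for y using that \<open>finite X\<close> by simp
  have upper: "F c \<le> Max (h ` X)" if "c \<in> unc_set E ch t" for c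
  proof -
    have "Min ((\<lambda>y. path_cost c y) ` X) \<in> (\<lambda>y. path_cost c y) ` X"
      using assms(2,3) by (intro Min_in) auto
    then obtain y where "y \<in> X" and y: "Min ((\<lambda>y. path_cost c y) ` X) = path_cost c y"
      by auto
    then have "F c \<le> h y"
      unfolding F_def h_def using path_cost_diff_le[OF that] assms(4,5) fin by auto
    with le_Max[OF \<open>y \<in> X\<close>] show ?thesis by linarith
  qed
  have "Max (h ` X) \<in> h ` X"
    using assms(2,3) by (intro Max_in) auto
  then obtain y0 where "y0 \<in> X" and y0: "Max (h ` X) = h y0"
    by auto
  define cw where "cw = worst_case_scenario ch x t"
  have cw: "cw \<in> unc_set E ch t"
    unfolding cw_def using assms(6,7) by (rule worst_case_scenario_in_unc_set)
  have "Min ((\<lambda>y. path_cost cw y) ` X) \<le> path_cost cw y0"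
    using \<open>finite X\<close> \<open>y0 \<in> X\<close> by simp
  moreover have "path_cost cw x - path_cost cw y0 = h y0"
    unfolding cw_def h_def using fin assms(4,5) \<open>y0 \<in> X\<close>
    by (intro path_cost_diff_worst_case_scenario) auto
  ultimately have "F cw = Max (h ` X)"
    using upper[OF cw] unfolding F_def y0 by linarith
  then have "Sup (F ` unc_set E ch t) = Max (h ` X)"
    using upper cw by (intro cSup_eq_maximum) (auto intro: rev_image_eqI)
  then show ?thesis unfolding regret_def F_def h_def .
qed

lemma worst_case_regret_eq_bicrit:
  assumes "finite x" "finite y"
  shows "(1 + t) * sum ch (x - y) - (1 - t) * sum ch (y - x)
       = (1 + t) * sum ch x - (t * fst (bicrit ch x y) + (1 - t) * snd (bicrit ch x y))"
proof -
  have "sum ch x = sum ch (x \<inter> y) + sum ch (x - y)" "sum ch y = sum ch (y \<inter> x) + sum ch (y - x)"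
    using sum.Int_Diff[OF assms(1), of ch y] sum.Int_Diff[OF assms(2), of ch x] by simp_all
  moreover have "fst (bicrit ch x y) = 2 * sum ch (x \<inter> y)" "snd (bicrit ch x y) = sum ch y"
    unfolding bicrit_def by (simp_all add: sum_distrib_left)
  ultimately show ?thesis by (simp add: Int_commute algebra_simps)
qed

lemma st_paths_subset_edges: "y \<in> st_paths E s t \<Longrightarrow> y \<subseteq> E"
  unfolding st_paths_def by auto

lemma finite_st_paths:
  assumes "finite E"
  shows "finite (st_paths E s t)"
proof -
  have "st_paths E s t \<subseteq> Pow E" by (auto dest: st_paths_subset_edges)
  then show ?thesis using assms by (simp add: finite_subset)
qed

definition regret_intercept :: "('e \<Rightarrow> real) \<Rightarrow> 'e set \<Rightarrow> 'e set \<Rightarrow> real" where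
  "regret_intercept ch x y = sum ch x - snd (bicrit ch x y)"

definition regret_slope :: "('e \<Rightarrow> real) \<Rightarrow> 'e set \<Rightarrow> 'e set \<Rightarrow> real" where
  "regret_slope ch x y = sum ch x - fst (bicrit ch x y) + snd (bicrit ch x y)"

lemma regret_line_eq:
  "regret_intercept ch x y + l * regret_slope ch x y
     = (1 + l) * sum ch x - (l * fst (bicrit ch x y) + (1 - l) * snd (bicrit ch x y))"
  unfolding regret_intercept_def regret_slope_def by (simp add: algebra_simps)

lemma upper_envelope_regret:
  assumes "finite E" "finite X" "x \<in> X" "\<And>y. y \<in> X \<Longrightarrow> y \<subseteq> E" "\<forall>e\<in>E. 0 \<le> ch e"
  shows "upper_envelope X (regret_intercept ch x) (regret_slope ch x) (regret E ch X x)"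
proof
  fix l :: real assume "l \<in> {0<..<1}"
  then have "regret E ch X x l = Max ((\<lambda>y. (1 + l) * sum ch (x - y) - (1 - l) * sum ch (y - x)) ` X)"
    using assms by (intro regret_eq_Max) auto
  also have "\<dots> = Max ((\<lambda>y. regret_intercept ch x y + l * regret_slope ch x y) ` X)"
    using finite_subset[OF assms(4) assms(1)] assms(3)
    by (intro arg_cong[where f = Max] image_cong) (simp_all add: regret_line_eq worst_case_regret_eq_bicrit)
  finally show "regret E ch X x l = Max ((\<lambda>y. regret_intercept ch x y + l * regret_slope ch x y) ` X)" .
qed (use assms(2,3) in auto)

lemma extreme_efficient_if_unique_top_line:
  assumes "finite X" "y \<in> X" "m \<in> {0<..<1}"
    and top: "\<forall>y'\<in>X. (regret_intercept ch x y', regret_slope ch x y')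
        \<noteq> (regret_intercept ch x y, regret_slope ch x y) \<longrightarrow>
      regret_intercept ch x y' + m * regret_slope ch x y' < regret_intercept ch x y + m * regret_slope ch x y"
  shows "y \<in> extreme_efficient ch x X"
proof (rule extreme_efficient_if_unique_weighted_sum_minimizer)
  fix y' assume "y' \<in> X" "bicrit ch x y' \<noteq> bicrit ch x y"
  then have "(regret_intercept ch x y', regret_slope ch x y') \<noteq> (regret_intercept ch x y, regret_slope ch x y)"
    unfolding regret_intercept_def regret_slope_def by (auto simp: prod_eq_iff)
  with top \<open>y' \<in> X\<close>
  show "m * fst (bicrit ch x y) + (1 - m) * snd (bicrit ch x y)
      < m * fst (bicrit ch x y') + (1 - m) * snd (bicrit ch x y')"
    by (auto simp: regret_line_eq)
qed (use assms(1-3) in auto)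

theorem lemma2:
  fixes V :: "'v set" and E :: "'v set set" and s t :: 'v
    and ch :: "'v set \<Rightarrow> real" and x :: "'v set set"
  assumes "finite V"
    and "E \<subseteq> {{u, v} | u v. u \<in> V \<and> v \<in> V \<and> u \<noteq> v}"
    and "s \<in> V" and "t \<in> V"
    and "\<forall>e\<in>E. ch e \<ge> 0"
    and "x \<in> st_paths E s t"
  shows "finite (changepoints (regret E ch (st_paths E s t) x))
       \<and> card (changepoints (regret E ch (st_paths E s t) x))
           \<le> card (extreme_efficient ch x (st_paths E s t))"
proof -
  define X where "X = st_paths E s t"
  have "E \<subseteq> Pow V" using assms(2) by blast
  then have "finite E" using assms(1) by (simp add: finite_subset)
  then have "finite X" unfolding X_def by (rule finite_st_paths)
  interpret upper_envelope X "regret_intercept ch x" "regret_slope ch x" "regret E ch X x"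
    using \<open>finite E\<close> \<open>finite X\<close> assms(5,6)
    unfolding X_def by (intro upper_envelope_regret) (auto dest: st_paths_subset_edges)
  have "finite (extreme_efficient ch x X)"
    using \<open>finite X\<close> by (rule finite_subset[rotated]) (auto simp: extreme_efficient_def efficient_def)
  then show ?thesis
    unfolding X_def[symmetric]
    using \<open>finite X\<close> extreme_efficient_if_unique_top_line by (intro card_changepoints_le) blast+
qed

end
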